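(* Let $\eta\in\mathbb{F}_{2^n}$ with $\mathbb{F}_{2^n}=\mathbb{F}_2(\eta)$, let $m\in\mathbb{N}$ and let $M_1,\dots,M_n$ satisfy $\emptyset\neq M_i\subsetneq[m]$ for $1\le i\le n$. Let $D=\Delta_{M_1}+\eta\Delta_{M_2}+\cdots+\eta^{n-1}\Delta_{M_n}\subseteq\mathbb{F}_{2^n}^m$ and $D^*=D\setminus\{0\}$. Then $C_{D^*}$ is a linear code over $\mathbb{F}_{2^n}$ of length $2^{\sum_{j=1}^n|M_j|}-1$ and dimension $|\bigcup_{j=1}^nM_j|$. If $A_i$ denotes the number of codewords of $C_{D^*}$ of weight $i$ and $Z_i=|\{v\in\mathbb{F}_{2^n}^m: wt(c_{D^*}(v))=i\}|$ for $0\le i\le|D^*|$, then $Z_0=2^{n(m-|\bigcup_{j=1}^nM_j|)}$ and $Z_i=Z_0A_i$ for $1\le i\le|D^*|$.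
   Context: $[m]=\{1,\dots,m\}$; $\Delta_L=\{w\in\mathbb{F}_2^m:\{i:w_i\ne0\}\subseteq L\}$. $\Delta_{M_1}+\eta\Delta_{M_2}+\cdots+\eta^{n-1}\Delta_{M_n}=\{d_1+\eta d_2+\cdots+\eta^{n-1}d_n: d_i\in\Delta_{M_i}\}$. For an ordered finite set $P\subseteq\mathbb{F}_{2^n}^m$, $c_P(v)=(v\cdot d)_{d\in P}$ with $v\cdot d=\sum_iv_id_i$, and $C_P=\{c_P(v):v\in\mathbb{F}_{2^n}^m\}$. *)

theory Defs
  imports Complex_Main "HOL-Library.Function_Algebras"
begin

text \<open>F_2(eta): the smallest subfield of the field 'a containing eta (it automatically
contains the prime field, generated by 1).\<close>
definition gen_subfield :: "'a::field \<Rightarrow> 'a set" where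
  "gen_subfield \<eta> = \<Inter>{S. 0 \<in> S \<and> 1 \<in> S \<and> \<eta> \<in> S \<and>
      (\<forall>x\<in>S. \<forall>y\<in>S. x + y \<in> S \<and> x * y \<in> S) \<and>
      (\<forall>x\<in>S. - x \<in> S \<and> inverse x \<in> S)}"

text \<open>Vectors of length m over a ring: functions nat => 'a, coordinates 1..m, zero elsewhere.\<close>
definition vecs :: "nat \<Rightarrow> (nat \<Rightarrow> 'a::zero) set" where
  "vecs m = {v. \<forall>k. k \<notin> {1..m} \<longrightarrow> v k = 0}"

text \<open>Delta_L (inside F_2^m, F_2 = {0,1} being the prime field of 'a, char 2).\<close>
definition Delta :: "nat set \<Rightarrow> (nat \<Rightarrow> 'a::{zero,one}) set" where
  "Delta L = {w. \<forall>k. w k \<in> {0, 1} \<and> (k \<notin> L \<longrightarrow> w k = 0)}"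

definition Dset :: "'a::field \<Rightarrow> nat \<Rightarrow> (nat \<Rightarrow> nat set) \<Rightarrow> (nat \<Rightarrow> 'a) set" where
  "Dset \<eta> n M = {(\<lambda>k. \<Sum>i=1..n. \<eta> ^ (i - 1) * d i k) | d.
       \<forall>i\<in>{1..n}. d i \<in> Delta (M i)}"

definition dotp :: "nat \<Rightarrow> (nat \<Rightarrow> 'a::comm_ring_1) \<Rightarrow> (nat \<Rightarrow> 'a) \<Rightarrow> 'a" where
  "dotp m v d = (\<Sum>k=1..m. v k * d k)"

text \<open>c_P(v) for an ordered set P given as a distinct list ps; the codeword is a vector
of length (length ps), coordinates 0..length ps - 1, zero elsewhere.\<close>
definition cP :: "nat \<Rightarrow> (nat \<Rightarrow> 'a::comm_ring_1) list \<Rightarrow> (nat \<Rightarrow> 'a) \<Rightarrow> (nat \<Rightarrow> 'a)" where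
  "cP m ps v = (\<lambda>i. if i < length ps then dotp m v (ps ! i) else 0)"

definition CP :: "nat \<Rightarrow> (nat \<Rightarrow> 'a::comm_ring_1) list \<Rightarrow> (nat \<Rightarrow> 'a) set" where
  "CP m ps = cP m ps ` vecs m"

definition wt :: "nat \<Rightarrow> (nat \<Rightarrow> 'a::zero) \<Rightarrow> nat" where
  "wt N c = card {i. i < N \<and> c i \<noteq> 0}"

definition wscale :: "'a::field \<Rightarrow> (nat \<Rightarrow> 'a) \<Rightarrow> (nat \<Rightarrow> 'a)" where
  "wscale c x = (\<lambda>i. c * x i)"

definition linear_code :: "nat \<Rightarrow> (nat \<Rightarrow> 'a::field) set \<Rightarrow> bool" where
  "linear_code N C \<longleftrightarrow> (\<forall>c\<in>C. \<forall>i. N \<le> i \<longrightarrow> c i = 0) \<and> module.subspace wscale C"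

definition code_dim :: "(nat \<Rightarrow> 'a::field) set \<Rightarrow> nat" where
  "code_dim C = vector_space.dim wscale C"

end

theory Submission
  imports Defs "HOL-Number_Theory.Residues" "HOL-Library.FuncSet"
begin

text \<open>Since \<open>F = F\<^sub>2(\<eta>)\<close> has \<open>2^n\<close> elements, the powers \<open>1, \<eta>, ..., \<eta>^(n-1)\<close> are
linearly independent over \<open>F\<^sub>2\<close>: a relation expressing \<open>\<eta>^k\<close>, \<open>k < n\<close>, through lower powers
would make the \<open>F\<^sub>2\<close>-span of \<open>1, ..., \<eta>^(k-1)\<close> a subfield containing \<open>\<eta>\<close>, of size at most
\<open>2^k\<close>. Hence \<open>(d\<^sub>1, ..., d\<^sub>n) \<mapsto> \<Sum>\<^sub>i \<eta>^(i-1) d\<^sub>i\<close> is a bijection from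
\<open>\<Delta>\<^bsub>M\<^sub>1\<^esub> \<times> ... \<times> \<Delta>\<^bsub>M\<^sub>n\<^esub>\<close> onto \<open>D\<close>, which gives \<open>|D|\<close>.
The map \<open>v \<mapsto> c\<^bsub>D*\<^esub>(v)\<close> is linear, and its kernel consists of the \<open>v\<close> vanishing on
\<open>U = M\<^sub>1 \<union> ... \<union> M\<^sub>n\<close>: every element of \<open>D\<close> is supported in \<open>U\<close>, while \<open>\<eta>^(i-1) e\<^sub>k\<close>
lies in \<open>D*\<close> for \<open>k \<in> M\<^sub>i\<close>. This yields the dimension and \<open>Z\<^sub>0\<close>, and \<open>Z\<^sub>i = Z\<^sub>0 A\<^sub>i\<close>
because every fibre of a linear map is a translate of its kernel.\<close>

section \<open>Powers of a generator over the prime field\<close>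

lemma one_plus_one_eq_zero_if_card_eq_power_two:
  assumes "card (UNIV :: 'a::{field,finite} set) = 2 ^ n"
  shows "(1::'a) + 1 = 0"
proof -
  have "CHAR('a) dvd 2 ^ n" using CHAR_dvd_CARD[where 'a='a] assms by simp
  then obtain i where "CHAR('a) = 2 ^ i" using divides_primepow_nat[of 2 "CHAR('a)" n] by auto
  then have "(of_nat (2 ^ i) :: 'a) = 0" using of_nat_CHAR[where 'a='a] by metis
  then have "(2::'a) ^ i = 0" by simp
  then show ?thesis by simp
qed

lemma minus_eq_self_if_one_plus_one_eq_zero:
  "(1::'a::ring_1) + 1 = 0 \<Longrightarrow> - x = (x::'a)"
  by (metis add.inverse_unique distrib_right mult_1 mult_zero_left)

definition F2_span :: "'a::field \<Rightarrow> nat \<Rightarrow> 'a set" where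
  "F2_span \<eta> k = {\<Sum>i<k. a i * \<eta> ^ i | a. \<forall>i. a i \<in> {0, 1}}"

lemma F2_spanI: "\<forall>i. a i \<in> {0, 1} \<Longrightarrow> (\<Sum>i<k. a i * \<eta> ^ i) \<in> F2_span \<eta> k"
  unfolding F2_span_def by blast

lemma F2_spanE:
  assumes "x \<in> F2_span \<eta> k"
  obtains a where "\<forall>i. a i \<in> {0, 1}" "x = (\<Sum>i<k. a i * \<eta> ^ i)"
  using assms unfolding F2_span_def by blast

lemma card_F2_span_le: "card (F2_span (\<eta>::'a::field) k) \<le> 2 ^ k"
proof -
  let ?comb = "\<lambda>a. \<Sum>i<k. a i * \<eta> ^ i"
  have "F2_span \<eta> k \<subseteq> ?comb ` (PiE {..<k} (\<lambda>_. {0, 1}))"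
  proof
    fix x assume "x \<in> F2_span \<eta> k"
    then obtain a where a: "\<forall>i. a i \<in> {0, 1}" "x = ?comb a" by (rule F2_spanE)
    then have "x = ?comb (restrict a {..<k})" "restrict a {..<k} \<in> PiE {..<k} (\<lambda>_. {0, 1})"
      by auto
    then show "x \<in> ?comb ` (PiE {..<k} (\<lambda>_. {0, 1}))" by blast
  qed
  then have "card (F2_span \<eta> k) \<le> card (?comb ` (PiE {..<k} (\<lambda>_. {0, 1})))"
    by (intro card_mono finite_imageI finite_PiE) auto
  also have "\<dots> \<le> card (PiE {..<k} (\<lambda>_. {0, 1::'a}))"
    by (rule card_image_le) (auto intro!: finite_PiE)
  also have "\<dots> = 2 ^ k" by (simp add: card_PiE numeral_2_eq_2)
  finally show ?thesis .
qed

lemma F2_span_add: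
  fixes \<eta> :: "'a::field"
  assumes char2: "(1::'a) + 1 = 0" and "x \<in> F2_span \<eta> k" "y \<in> F2_span \<eta> k"
  shows "x + y \<in> F2_span \<eta> k"
proof -
  obtain a where a: "\<forall>i. a i \<in> {0, 1}" "x = (\<Sum>i<k. a i * \<eta> ^ i)"
    using assms(2) by (rule F2_spanE)
  obtain b where b: "\<forall>i. b i \<in> {0, 1}" "y = (\<Sum>i<k. b i * \<eta> ^ i)"
    using assms(3) by (rule F2_spanE)
  have "x + y = (\<Sum>i<k. (a i + b i) * \<eta> ^ i)"
    by (simp add: a(2) b(2) sum.distrib distrib_right)
  also have "\<dots> \<in> F2_span \<eta> k"
  proof (rule F2_spanI, rule allI)
    fix i
    show "a i + b i \<in> {0, 1}" using a(1)[rule_format, of i] b(1)[rule_format, of i] char2 by auto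
  qed
  finally show ?thesis .
qed

lemma zero_mem_F2_span: "0 \<in> F2_span \<eta> k"
  using F2_spanI[of "\<lambda>_. 0"] by simp

lemma power_mem_F2_span:
  assumes "j < k"
  shows "\<eta> ^ j \<in> F2_span \<eta> k"
proof -
  have "(\<Sum>i<k. (if i = j then 1 else 0) * \<eta> ^ i) = (\<Sum>i<k. if i = j then \<eta> ^ i else 0)"
    by (rule sum.cong) auto
  also have "\<dots> = \<eta> ^ j" using assms by simp
  moreover have "(\<Sum>i<k. (if i = j then 1 else 0) * \<eta> ^ i) \<in> F2_span \<eta> k"
    by (rule F2_spanI) simp
  ultimately show ?thesis by simp
qed

lemma F2_combination_mem_F2_span:
  fixes \<eta> :: "'a::field" and j :: nat
  assumes char2: "(1::'a) + 1 = 0" and "\<forall>i. a i \<in> {0, 1}"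
    and "\<forall>i<j. s i \<in> F2_span \<eta> k"
  shows "(\<Sum>i<j. a i * s i) \<in> F2_span \<eta> k"
  using assms(3)
proof (induction j)
  case 0
  show ?case by (simp add: zero_mem_F2_span)
next
  case (Suc j)
  then have "a j * s j \<in> F2_span \<eta> k"
    using assms(2) zero_mem_F2_span by (cases "a j = 0") auto
  with Suc show ?case by (simp add: F2_span_add[OF char2])
qed

lemma F2_span_mult_closed:
  fixes \<eta> :: "'a::field"
  assumes char2: "(1::'a) + 1 = 0" and top: "\<eta> ^ k \<in> F2_span \<eta> k"
    and x: "x \<in> F2_span \<eta> k" and y: "y \<in> F2_span \<eta> k"
  shows "x * y \<in> F2_span \<eta> k"
proof -
  have powers: "\<eta> ^ j \<in> F2_span \<eta> k" if "j \<le> k" for j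
  proof (cases "j < k")
    case False
    with that have "j = k" by simp
    with top show ?thesis by simp
  qed (rule power_mem_F2_span)
  have times_eta: "\<eta> * z \<in> F2_span \<eta> k" if z: "z \<in> F2_span \<eta> k" for z
  proof -
    obtain a where a: "\<forall>i. a i \<in> {0, 1}" "z = (\<Sum>i<k. a i * \<eta> ^ i)"
      using z by (rule F2_spanE)
    then have "\<eta> * z = (\<Sum>i<k. a i * \<eta> ^ Suc i)"
      by (simp add: sum_distrib_left mult.left_commute)
    also have "\<dots> \<in> F2_span \<eta> k"
      using a(1) by (intro F2_combination_mem_F2_span[OF char2] allI impI powers) auto
    finally show ?thesis .
  qed
  have times_powers: "\<eta> ^ j * y \<in> F2_span \<eta> k" for j
    by (induction j) (simp_all add: y mult.assoc times_eta)
  obtain a where a: "\<forall>i. a i \<in> {0, 1}" "x = (\<Sum>i<k. a i * \<eta> ^ i)"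
    using x by (rule F2_spanE)
  then have "x * y = (\<Sum>i<k. a i * (\<eta> ^ i * y))"
    by (simp add: sum_distrib_right mult.assoc)
  also have "\<dots> \<in> F2_span \<eta> k"
    using a(1) times_powers by (intro F2_combination_mem_F2_span[OF char2]) auto
  finally show ?thesis .
qed

lemma gen_subfield_subset:
  fixes S :: "'a::field set"
  assumes "finite S" and "0 \<in> S" "1 \<in> S" "\<eta> \<in> S"
    and add: "\<And>x y. x \<in> S \<Longrightarrow> y \<in> S \<Longrightarrow> x + y \<in> S"
    and mult: "\<And>x y. x \<in> S \<Longrightarrow> y \<in> S \<Longrightarrow> x * y \<in> S"
    and uminus: "\<And>x. x \<in> S \<Longrightarrow> - x \<in> S"
  shows "gen_subfield \<eta> \<subseteq> S"
proof -
  have "inverse x \<in> S" if "x \<in> S" for x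
  proof (cases "x = 0")
    case False
    have "(\<lambda>y. x * y) ` S = S"
      using \<open>finite S\<close> False that mult by (intro endo_inj_surj) (auto simp: inj_on_def)
    then obtain y where "y \<in> S" "x * y = 1" using \<open>1 \<in> S\<close> by (metis imageE)
    then show ?thesis using False by (metis inverse_unique)
  qed (use \<open>0 \<in> S\<close> in simp)
  then show ?thesis
    unfolding gen_subfield_def using assms by (intro Inter_lower) auto
qed

lemma le_if_power_mem_F2_span:
  fixes \<eta> :: "'a::{field,finite}"
  assumes card_field: "card (UNIV :: 'a set) = 2 ^ n" and gen: "gen_subfield \<eta> = UNIV"
    and top: "\<eta> ^ k \<in> F2_span \<eta> k"
  shows "n \<le> k"
proof -
  have char2: "(1::'a) + 1 = 0"
    using card_field by (rule one_plus_one_eq_zero_if_card_eq_power_two)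
  have "k \<noteq> 0"
  proof
    assume "k = 0"
    then show False using top by (simp add: F2_span_def)
  qed
  then have one: "1 \<in> F2_span \<eta> k" and eta: "\<eta> \<in> F2_span \<eta> k"
    using power_mem_F2_span[of 0 k \<eta>] power_mem_F2_span[of 1 k \<eta>] top
    by (cases "k = 1"; simp)+
  have "gen_subfield \<eta> \<subseteq> F2_span \<eta> k"
  proof (rule gen_subfield_subset)
    show "- x \<in> F2_span \<eta> k" if "x \<in> F2_span \<eta> k" for x
      using that by (simp only: minus_eq_self_if_one_plus_one_eq_zero[OF char2])
  qed (use one eta zero_mem_F2_span F2_span_add[OF char2] F2_span_mult_closed[OF char2 top] in auto)
  then have "F2_span \<eta> k = UNIV" using gen by auto
  then have "2 ^ n = card (F2_span \<eta> k)" using card_field by simp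
  also have "\<dots> \<le> 2 ^ k" by (rule card_F2_span_le)
  finally show ?thesis by simp
qed

lemma F2_independent_powers:
  fixes \<eta> :: "'a::{field,finite}"
  assumes card_field: "card (UNIV :: 'a set) = 2 ^ n" and gen: "gen_subfield \<eta> = UNIV"
    and c: "\<forall>i<n. c i \<in> {0, 1}" and rel: "(\<Sum>i<n. c i * \<eta> ^ i) = 0"
  shows "\<forall>i<n. c i = 0"
proof (rule ccontr)
  have char2: "(1::'a) + 1 = 0"
    using card_field by (rule one_plus_one_eq_zero_if_card_eq_power_two)
  define I where "I = {i. i < n \<and> c i \<noteq> 0}"
  assume "\<not> (\<forall>i<n. c i = 0)"
  then have "I \<noteq> {}" by (auto simp: I_def)
  define k where "k = Max I"
  have "k \<in> I" unfolding k_def using \<open>I \<noteq> {}\<close> by (intro Max_in) (auto simp: I_def)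
  then have "k < n" and ck: "c k = 1" using c by (auto simp: I_def)
  have above: "c i = 0" if "k < i" "i < n" for i
    using Max_ge[of I i] that by (fastforce simp: k_def I_def)
  have "(\<Sum>i<n. c i * \<eta> ^ i) = (\<Sum>i<Suc k. c i * \<eta> ^ i)"
    using \<open>k < n\<close> above by (intro sum.mono_neutral_right) auto
  with rel ck have "(\<Sum>i<k. c i * \<eta> ^ i) + \<eta> ^ k = 0" by simp
  then have "\<eta> ^ k = (\<Sum>i<k. (if i < k then c i else 0) * \<eta> ^ i)"
    using minus_eq_self_if_one_plus_one_eq_zero[OF char2] by (simp add: add_eq_0_iff2)
  also have "\<dots> \<in> F2_span \<eta> k" using c \<open>k < n\<close> by (intro F2_spanI) simp
  finally have "n \<le> k" using card_field gen by (intro le_if_power_mem_F2_span)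
  with \<open>k < n\<close> show False by simp
qed

lemma F2_combination_eq_imp_eq:
  fixes \<eta> :: "'a::{field,finite}"
  assumes card_field: "card (UNIV :: 'a set) = 2 ^ n" and gen: "gen_subfield \<eta> = UNIV"
    and a: "\<forall>i\<in>{1..n}. a i \<in> {0, 1}" and b: "\<forall>i\<in>{1..n}. b i \<in> {0, 1}"
    and eq: "(\<Sum>i=1..n. \<eta> ^ (i - 1) * a i) = (\<Sum>i=1..n. \<eta> ^ (i - 1) * b i)"
  shows "\<forall>i\<in>{1..n}. a i = b i"
proof -
  have char2: "(1::'a) + 1 = 0"
    using card_field by (rule one_plus_one_eq_zero_if_card_eq_power_two)
  define c where "c i = a (Suc i) - b (Suc i)" for i
  have "c i \<in> {0, 1}" if "i < n" for i
  proof -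
    have "a (Suc i) \<in> {0, 1}" "b (Suc i) \<in> {0, 1}" using a b that by auto
    then show ?thesis
      using minus_eq_self_if_one_plus_one_eq_zero[OF char2, of 1] by (auto simp: c_def)
  qed
  moreover have "(\<Sum>i<n. c i * \<eta> ^ i) = 0"
  proof -
    have "(\<Sum>i<n. c i * \<eta> ^ i) = (\<Sum>i=1..n. \<eta> ^ (i - 1) * (a i - b i))"
      by (simp only: One_nat_def sum.atLeast1_atMost_eq) (simp add: c_def mult.commute)
    also have "\<dots> = 0" using eq by (simp add: right_diff_distrib sum_subtractf)
    finally show ?thesis .
  qed
  ultimately have "\<forall>i<n. c i = 0" using card_field gen by (intro F2_independent_powers) auto
  moreover have "i - 1 < n" "Suc (i - 1) = i" if "i \<in> {1..n}" for i using that by auto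
  ultimately show ?thesis by (metis c_def eq_iff_diff_eq_0)
qed

lemma eta_power_neq_zero:
  fixes \<eta> :: "'a::{field,finite}"
  assumes card_field: "card (UNIV :: 'a set) = 2 ^ n" and gen: "gen_subfield \<eta> = UNIV"
    and "i \<in> {1..n}"
  shows "\<eta> ^ (i - 1) \<noteq> 0"
proof
  let ?e = "\<lambda>j. if j = i then 1 else 0 :: 'a"
  assume "\<eta> ^ (i - 1) = 0"
  have "(\<Sum>j=1..n. \<eta> ^ (j - 1) * ?e j) = (\<Sum>j=1..n. if j = i then \<eta> ^ (j - 1) else 0)"
    by (rule sum.cong) auto
  also have "\<dots> = \<eta> ^ (i - 1)" using assms(3) by simp
  also have "\<dots> = (\<Sum>j=1..n. \<eta> ^ (j - 1) * 0)" using \<open>\<eta> ^ (i - 1) = 0\<close> by simp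
  finally have eq: "(\<Sum>j=1..n. \<eta> ^ (j - 1) * ?e j) = (\<Sum>j=1..n. \<eta> ^ (j - 1) * 0)" .
  have "\<forall>j\<in>{1..n}. ?e j = 0" by (rule F2_combination_eq_imp_eq[OF card_field gen _ _ eq]) auto
  then have "?e i = 0" using assms(3) by blast
  then show False by simp
qed

section \<open>Counting functions of prescribed support\<close>

lemma bij_betw_restrict_supported_funs:
  assumes "0 \<in> B"
  shows "bij_betw (\<lambda>w. restrict w A) {w. \<forall>k. w k \<in> B \<and> (k \<notin> A \<longrightarrow> w k = 0)} (PiE A (\<lambda>_. B))"
proof (rule bij_betwI[where g = "\<lambda>f k. if k \<in> A then f k else 0"])
  show "(\<lambda>f k. if k \<in> A then f k else 0) \<in> PiE A (\<lambda>_. B) \<rightarrow> {w. \<forall>k. w k \<in> B \<and> (k \<notin> A \<longrightarrow> w k = 0)}"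
    using assms by auto
  show "restrict (\<lambda>k. if k \<in> A then f k else 0) A = f" if "f \<in> PiE A (\<lambda>_. B)" for f
    using that by (auto simp: fun_eq_iff PiE_def extensional_def)
qed (auto simp: fun_eq_iff)

lemma card_supported_funs:
  assumes "0 \<in> B" "finite A"
  shows "card {w. \<forall>k. w k \<in> B \<and> (k \<notin> A \<longrightarrow> w k = 0)} = card B ^ card A"
  using bij_betw_same_card[OF bij_betw_restrict_supported_funs[OF assms(1), of A]] assms(2)
  by (simp add: card_PiE)

lemma finite_supported_funs:
  assumes "0 \<in> B" "finite A" "finite B"
  shows "finite {w. \<forall>k. w k \<in> B \<and> (k \<notin> A \<longrightarrow> w k = 0)}"
  using bij_betw_finite[OF bij_betw_restrict_supported_funs[OF assms(1), of A]] assms(2,3)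
  by (simp add: finite_PiE)

lemma card_Delta:
  assumes "finite L"
  shows "card (Delta L :: (nat \<Rightarrow> 'a::zero_neq_one) set) = 2 ^ card L"
  unfolding Delta_def using card_supported_funs[of "{0, 1::'a}" L] assms
  by (simp add: numeral_2_eq_2)

lemma finite_vecs: "finite (vecs m :: (nat \<Rightarrow> 'a::{zero,finite}) set)"
  using finite_supported_funs[of "UNIV :: 'a set" "{1..m}"] unfolding vecs_def by simp

section \<open>The defining set \<open>D\<close>\<close>

definition eta_sum :: "'a::field \<Rightarrow> nat \<Rightarrow> (nat \<Rightarrow> nat \<Rightarrow> 'a) \<Rightarrow> nat \<Rightarrow> 'a" where
  "eta_sum \<eta> n d = (\<lambda>k. \<Sum>i=1..n. \<eta> ^ (i - 1) * d i k)"

lemma Dset_eq_image: "Dset \<eta> n M = eta_sum \<eta> n ` PiE {1..n} (\<lambda>i. Delta (M i))"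
proof
  show "Dset \<eta> n M \<subseteq> eta_sum \<eta> n ` PiE {1..n} (\<lambda>i. Delta (M i))"
  proof
    fix x assume "x \<in> Dset \<eta> n M"
    then obtain d where d: "x = eta_sum \<eta> n d" "\<forall>i\<in>{1..n}. d i \<in> Delta (M i)"
      unfolding Dset_def eta_sum_def by blast
    then have "x = eta_sum \<eta> n (restrict d {1..n})"
      by (auto simp: eta_sum_def fun_eq_iff intro!: sum.cong)
    moreover have "restrict d {1..n} \<in> PiE {1..n} (\<lambda>i. Delta (M i))" using d(2) by auto
    ultimately show "x \<in> eta_sum \<eta> n ` PiE {1..n} (\<lambda>i. Delta (M i))" by blast
  qed
qed (auto simp: Dset_def eta_sum_def)

lemma inj_on_eta_sum:
  fixes \<eta> :: "'a::{field,finite}"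
  assumes card_field: "card (UNIV :: 'a set) = 2 ^ n" and gen: "gen_subfield \<eta> = UNIV"
  shows "inj_on (eta_sum \<eta> n) (PiE {1..n} (\<lambda>i. Delta (M i)))"
proof (rule inj_onI)
  fix d d' assume d: "d \<in> PiE {1..n} (\<lambda>i. Delta (M i))" and d': "d' \<in> PiE {1..n} (\<lambda>i. Delta (M i))"
    and eq: "eta_sum \<eta> n d = eta_sum \<eta> n d'"
  show "d = d'"
  proof (rule PiE_ext[OF d d'])
    fix i assume i: "i \<in> {1..n}"
    show "d i = d' i"
    proof
      fix k
      have "\<forall>j\<in>{1..n}. d j k \<in> {0, 1}" "\<forall>j\<in>{1..n}. d' j k \<in> {0, 1}"
        using d d' by (auto simp: Delta_def)
      moreover have "(\<Sum>j=1..n. \<eta> ^ (j - 1) * d j k) = (\<Sum>j=1..n. \<eta> ^ (j - 1) * d' j k)"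
        using fun_cong[OF eq, of k] by (simp add: eta_sum_def)
      ultimately show "d i k = d' i k"
        using F2_combination_eq_imp_eq[OF card_field gen, of "\<lambda>j. d j k" "\<lambda>j. d' j k"] i by blast
    qed
  qed
qed

lemma card_Dset:
  fixes \<eta> :: "'a::{field,finite}"
  assumes card_field: "card (UNIV :: 'a set) = 2 ^ n" and gen: "gen_subfield \<eta> = UNIV"
    and fin: "\<forall>i\<in>{1..n}. finite (M i)"
  shows "card (Dset \<eta> n M) = 2 ^ (\<Sum>j=1..n. card (M j))"
proof -
  have "card (Dset \<eta> n M) = (\<Prod>i=1..n. card (Delta (M i) :: (nat \<Rightarrow> 'a) set))"
    unfolding Dset_eq_image card_image[OF inj_on_eta_sum[OF card_field gen]] by (simp add: card_PiE)
  also have "\<dots> = (\<Prod>i=1..n. 2 ^ card (M i))" using fin by (intro prod.cong) (simp_all add: card_Delta)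
  finally show ?thesis by (simp add: power_sum)
qed

lemma zero_mem_Dset: "0 \<in> Dset \<eta> n M"
  unfolding Dset_def by (auto simp: Delta_def fun_eq_iff intro!: exI[of _ "\<lambda>_ _. 0"])

lemma length_enum_nonzero_Dset:
  fixes \<eta> :: "'a::{field,finite}"
  assumes card_field: "card (UNIV :: 'a set) = 2 ^ n" and gen: "gen_subfield \<eta> = UNIV"
    and fin: "\<forall>i\<in>{1..n}. finite (M i)"
    and ps: "distinct ps" "set ps = Dset \<eta> n M - {0}"
  shows "length ps = 2 ^ (\<Sum>j=1..n. card (M j)) - 1"
proof -
  have "length ps = card (Dset \<eta> n M - {0})" using distinct_card[OF ps(1)] ps(2) by simp
  also have "\<dots> = 2 ^ (\<Sum>j=1..n. card (M j)) - 1"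
    using card_Dset[OF card_field gen fin] by (simp add: card_Diff_singleton zero_mem_Dset)
  finally show ?thesis .
qed

lemma unit_mem_Dset:
  fixes \<eta> :: "'a::field"
  assumes "i \<in> {1..n}" "k \<in> M i"
  shows "(\<lambda>l. if l = k then \<eta> ^ (i - 1) else 0) \<in> Dset \<eta> n M"
proof -
  define d where "d j l = (if j = i \<and> l = k then 1 else 0 :: 'a)" for j l
  have "eta_sum \<eta> n d l = (\<Sum>j=1..n. if j = i then \<eta> ^ (j - 1) * d j l else 0)" for l
    unfolding eta_sum_def by (rule sum.cong) (auto simp: d_def)
  then have "eta_sum \<eta> n d = (\<lambda>l. if l = k then \<eta> ^ (i - 1) else 0)"
    using assms(1) by (auto simp: fun_eq_iff d_def)
  moreover have "\<forall>j\<in>{1..n}. d j \<in> Delta (M j)" using assms(2) by (auto simp: d_def Delta_def)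
  ultimately show ?thesis unfolding Dset_def eta_sum_def by (intro CollectI exI[of _ d] conjI) auto
qed

lemma Dset_vanishes_outside_Union:
  assumes "x \<in> Dset \<eta> n M" "k \<notin> (\<Union>j\<in>{1..n}. M j)"
  shows "x k = 0"
  using assms by (auto simp: Dset_def Delta_def intro!: sum.neutral)

section \<open>The code \<open>C\<^bsub>D*\<^esub>\<close>\<close>

interpretation word: vector_space "wscale :: 'a::field \<Rightarrow> (nat \<Rightarrow> 'a) \<Rightarrow> nat \<Rightarrow> 'a"
  by unfold_locales (auto simp: wscale_def fun_eq_iff algebra_simps)

lemma linear_cP: "Vector_Spaces.linear wscale wscale (cP m ps)"
  unfolding Vector_Spaces.linear_iff
  by (auto simp: word.vector_space_axioms cP_def dotp_def wscale_def fun_eq_iff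
      sum.distrib distrib_right sum_distrib_left mult.assoc)

lemma subspace_vecs: "word.subspace (vecs m)"
  by (auto simp: word.subspace_def vecs_def wscale_def)

lemma cP_eq_0_iff: "cP m ps v = 0 \<longleftrightarrow> (\<forall>d\<in>set ps. dotp m v d = 0)"
  by (auto simp: cP_def fun_eq_iff all_set_conv_all_nth)

lemma wt_eq_0_iff:
  assumes "\<forall>i\<ge>N. c i = 0"
  shows "wt N c = 0 \<longleftrightarrow> c = 0"
  using assms by (auto simp: wt_def fun_eq_iff) (meson not_le_imp_less)

lemma linear_code_CP: "linear_code (length ps) (CP m ps)"
proof -
  interpret cP: Vector_Spaces.linear wscale wscale "cP m ps" by (rule linear_cP)
  show ?thesis
    unfolding linear_code_def CP_def
    using cP.subspace_image[OF subspace_vecs] by (auto simp: cP_def)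
qed

lemma card_fibres_additive:
  fixes f :: "'b::ab_group_add \<Rightarrow> 'c::ab_group_add"
  assumes "finite V"
    and V_diff: "\<And>u v. u \<in> V \<Longrightarrow> v \<in> V \<Longrightarrow> u - v \<in> V"
    and V_add: "\<And>u v. u \<in> V \<Longrightarrow> v \<in> V \<Longrightarrow> u + v \<in> V"
    and f_add: "\<And>u v. f (u + v) = f u + f v"
  shows "card {v\<in>V. P (f v)} = card {v\<in>V. f v = 0} * card {c\<in>f ` V. P c}"
proof -
  have f_diff: "f (u - v) = f u - f v" for u v
    using f_add[of "u - v" v] by (simp add: eq_diff_eq)
  have fibre: "card {v\<in>V. f v = c} = card {v\<in>V. f v = 0}" if c: "c \<in> f ` V" for c
  proof -
    obtain v0 where v0: "v0 \<in> V" "c = f v0" using c by blast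
    have "{v\<in>V. f v = c} = (\<lambda>u. v0 + u) ` {v\<in>V. f v = 0}"
    proof (intro equalityI subsetI)
      fix v assume "v \<in> {v\<in>V. f v = c}"
      then have "v - v0 \<in> {v\<in>V. f v = 0}" "v = v0 + (v - v0)"
        using v0 V_diff f_diff by auto
      then show "v \<in> (\<lambda>u. v0 + u) ` {v\<in>V. f v = 0}" by blast
    qed (use v0 V_add f_add in auto)
    then show ?thesis by (simp add: card_image)
  qed
  have "{v\<in>V. P (f v)} = (\<Union>c\<in>{c\<in>f ` V. P c}. {v\<in>V. f v = c})" by auto
  then have "card {v\<in>V. P (f v)} = (\<Sum>c\<in>{c\<in>f ` V. P c}. card {v\<in>V. f v = c})"
    using \<open>finite V\<close> by (simp only:) (rule card_UN_disjoint; auto)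
  also have "\<dots> = (\<Sum>c\<in>{c\<in>f ` V. P c}. card {v\<in>V. f v = 0})"
    using fibre by (intro sum.cong) auto
  finally show ?thesis by simp
qed

lemma sum_apply: "(\<Sum>x\<in>A. f x) k = (\<Sum>x\<in>A. (f x k :: 'c::comm_monoid_add))"
  by (induction A rule: infinite_finite_induct) auto

definition unit_vec :: "nat \<Rightarrow> nat \<Rightarrow> 'a::zero_neq_one" where
  "unit_vec k = (\<lambda>l. if l = k then 1 else 0)"

lemma sum_wscale_unit_vec_apply:
  assumes "finite K"
  shows "(\<Sum>k\<in>K. wscale (c k) (unit_vec k)) l = (if l \<in> K then c l else (0::'a::field))"
proof -
  have "(\<Sum>k\<in>K. wscale (c k) (unit_vec k)) l = (\<Sum>k\<in>K. if l = k then c k else 0)"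
    unfolding sum_apply by (rule sum.cong) (simp_all add: wscale_def unit_vec_def)
  then show ?thesis using assms by simp
qed

lemma vecs_eq_sum_unit_vec:
  assumes "v \<in> vecs m"
  shows "v = (\<Sum>k\<in>{1..m}. wscale (v k) (unit_vec k :: nat \<Rightarrow> 'a::field))"
  using assms by (simp add: fun_eq_iff sum_wscale_unit_vec_apply vecs_def)

lemma CP_subset_span_unit_vec:
  fixes ps :: "(nat \<Rightarrow> 'a::field) list"
  assumes "\<And>k. k \<in> {1..m} - U \<Longrightarrow> cP m ps (unit_vec k) = 0"
  shows "CP m ps \<subseteq> word.span ((\<lambda>k. cP m ps (unit_vec k)) ` U)"
proof
  interpret cP: Vector_Spaces.linear wscale wscale "cP m ps" by (rule linear_cP)
  fix x assume "x \<in> CP m ps"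
  then obtain v where v: "v \<in> vecs m" "x = cP m ps v" by (auto simp: CP_def)
  then have "x = cP m ps (\<Sum>k\<in>{1..m}. wscale (v k) (unit_vec k))"
    using vecs_eq_sum_unit_vec by metis
  also have "\<dots> = (\<Sum>k\<in>{1..m}. wscale (v k) (cP m ps (unit_vec k)))"
    by (simp add: cP.sum cP.scale)
  also have "\<dots> \<in> word.span ((\<lambda>k. cP m ps (unit_vec k)) ` U)"
  proof (rule word.span_sum)
    fix k assume "k \<in> {1..m}"
    then show "wscale (v k) (cP m ps (unit_vec k)) \<in> word.span ((\<lambda>k. cP m ps (unit_vec k)) ` U)"
      using assms[of k]
      by (cases "k \<in> U") (simp_all add: word.span_base word.span_scale word.span_zero)
  qed
  finally show "x \<in> word.span ((\<lambda>k. cP m ps (unit_vec k)) ` U)" .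
qed

lemma independent_image_unit_vec:
  fixes ps :: "(nat \<Rightarrow> 'a::field) list"
  assumes "finite U" and ker: "\<And>v. cP m ps v = 0 \<Longrightarrow> \<forall>k\<in>U. v k = 0"
  shows "inj_on (\<lambda>k. cP m ps (unit_vec k)) U"
    and "word.independent ((\<lambda>k. cP m ps (unit_vec k)) ` U)"
proof -
  interpret cP: Vector_Spaces.linear wscale wscale "cP m ps" by (rule linear_cP)
  let ?g = "\<lambda>k. cP m ps (unit_vec k)"
  show inj: "inj_on ?g U"
  proof (rule inj_onI)
    fix k k' assume "k \<in> U" "k' \<in> U" "?g k = ?g k'"
    then have "cP m ps (unit_vec k - unit_vec k') = 0" by (simp add: cP.diff)
    then have "(unit_vec k - unit_vec k' :: nat \<Rightarrow> 'a) k = 0" using ker \<open>k \<in> U\<close> by blast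
    then show "k = k'" by (auto simp: unit_vec_def split: if_splits)
  qed
  show "word.independent (?g ` U)"
  proof (rule word.independent_if_scalars_zero)
    fix c x assume sum: "(\<Sum>x\<in>?g ` U. wscale (c x) x) = 0" and "x \<in> ?g ` U"
    then obtain l where l: "l \<in> U" "x = ?g l" by blast
    define w where "w = (\<Sum>k\<in>U. wscale (c (?g k)) (unit_vec k))"
    have "cP m ps w = (\<Sum>k\<in>U. wscale (c (?g k)) (?g k))" by (simp add: w_def cP.sum cP.scale)
    also have "\<dots> = 0" using sum by (simp add: sum.reindex[OF inj])
    finally have "w l = 0" using ker l(1) by blast
    moreover have "w l = c (?g l)" using \<open>finite U\<close> l(1) by (simp add: w_def sum_wscale_unit_vec_apply)
    ultimately show "c x = 0" using l(2) by simp
  qed (use \<open>finite U\<close> in simp)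
qed

lemma code_dim_CP:
  fixes ps :: "(nat \<Rightarrow> 'a::field) list"
  assumes U: "U \<subseteq> {1..m}" and ker: "\<And>v. cP m ps v = 0 \<longleftrightarrow> (\<forall>k\<in>U. v k = 0)"
  shows "code_dim (CP m ps) = card U"
proof -
  let ?g = "\<lambda>k. cP m ps (unit_vec k)"
  have "finite U" using U finite_subset by blast
  note indep = independent_image_unit_vec[OF \<open>finite U\<close>, of m ps]
  have "?g ` U \<subseteq> CP m ps" using U by (auto simp: CP_def vecs_def unit_vec_def)
  moreover have "CP m ps \<subseteq> word.span (?g ` U)"
    using ker by (intro CP_subset_span_unit_vec) (auto simp: unit_vec_def)
  moreover have "word.independent (?g ` U)" using ker by (intro indep(2)) blast
  ultimately have "code_dim (CP m ps) = card (?g ` U)"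
    unfolding code_dim_def by (intro word.dim_unique) auto
  also have "\<dots> = card U" using ker by (intro card_image indep(1)) blast
  finally show ?thesis .
qed

lemma wt_cP_eq_0_iff: "wt (length ps) (cP m ps v) = 0 \<longleftrightarrow> cP m ps v = 0"
  by (rule wt_eq_0_iff) (simp add: cP_def)

lemma card_kernel_cP:
  fixes ps :: "(nat \<Rightarrow> 'a::{field,finite}) list"
  assumes U: "U \<subseteq> {1..m}" and ker: "\<And>v. cP m ps v = 0 \<longleftrightarrow> (\<forall>k\<in>U. v k = 0)"
  shows "card {v \<in> vecs m. cP m ps v = 0} = card (UNIV :: 'a set) ^ (m - card U)"
proof -
  have "{v \<in> vecs m. cP m ps v = 0} = {w. \<forall>k. w k \<in> UNIV \<and> (k \<notin> {1..m} - U \<longrightarrow> w k = 0)}"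
    using ker U by (auto simp: vecs_def)
  also have "card \<dots> = card (UNIV :: 'a set) ^ card ({1..m} - U)"
    using U by (intro card_supported_funs) (auto intro: finite_subset)
  also have "card ({1..m} - U) = m - card U" using U by (simp add: card_Diff_subset finite_subset)
  finally show ?thesis .
qed

lemma cP_eq_0_iff_vanishes_on_Union:
  fixes \<eta> :: "'a::{field,finite}"
  assumes card_field: "card (UNIV :: 'a set) = 2 ^ n" and gen: "gen_subfield \<eta> = UNIV"
    and M_sub: "\<forall>i\<in>{1..n}. M i \<subseteq> {1..m}" and ps: "set ps = Dset \<eta> n M - {0}"
  shows "cP m ps v = 0 \<longleftrightarrow> (\<forall>k\<in>(\<Union>j\<in>{1..n}. M j). v k = 0)"
proof
  assume "cP m ps v = 0"
  then have orth: "\<forall>d\<in>set ps. dotp m v d = 0" by (simp add: cP_eq_0_iff)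
  show "\<forall>k\<in>(\<Union>j\<in>{1..n}. M j). v k = 0"
  proof
    fix k assume "k \<in> (\<Union>j\<in>{1..n}. M j)"
    then obtain i where i: "i \<in> {1..n}" "k \<in> M i" by blast
    let ?u = "\<lambda>l. if l = k then \<eta> ^ (i - 1) else 0"
    have nz: "\<eta> ^ (i - 1) \<noteq> 0" by (rule eta_power_neq_zero[OF card_field gen i(1)])
    then have "?u \<in> set ps" using unit_mem_Dset[where M = M, OF i] ps by (auto simp: fun_eq_iff)
    moreover have "dotp m v ?u = v k * \<eta> ^ (i - 1)"
    proof -
      have "dotp m v ?u = (\<Sum>l=1..m. if l = k then v l * \<eta> ^ (i - 1) else 0)"
        unfolding dotp_def by (rule sum.cong) auto
      moreover have "k \<in> {1..m}" using i M_sub by blast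
      ultimately show ?thesis by simp
    qed
    ultimately have "v k * \<eta> ^ (i - 1) = 0" using orth by metis
    with nz show "v k = 0" by auto
  qed
next
  assume vanish: "\<forall>k\<in>(\<Union>j\<in>{1..n}. M j). v k = 0"
  have "dotp m v x = 0" if "x \<in> Dset \<eta> n M" for x
  proof -
    have "v k * x k = 0" for k
      using vanish Dset_vanishes_outside_Union[OF that, of k] by (cases "k \<in> (\<Union>j\<in>{1..n}. M j)") auto
    then show ?thesis unfolding dotp_def by (simp add: sum.neutral)
  qed
  then show "cP m ps v = 0" using ps by (simp add: cP_eq_0_iff)
qed

theorem mainTheorem5:
  fixes \<eta> :: "'a::{field,finite}" and n m :: nat and M :: "nat \<Rightarrow> nat set"
    and ps :: "(nat \<Rightarrow> 'a) list"
  assumes card_field: "card (UNIV :: 'a set) = 2 ^ n"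
    and gen: "gen_subfield \<eta> = UNIV"
    and M_ne: "\<forall>i\<in>{1..n}. M i \<noteq> {}"
    and M_sub: "\<forall>i\<in>{1..n}. M i \<subset> {1..m}"
    and ps_enum: "distinct ps" "set ps = Dset \<eta> n M - {0}"
  shows "linear_code (length ps) (CP m ps)
    \<and> length ps = 2 ^ (\<Sum>j=1..n. card (M j)) - 1
    \<and> code_dim (CP m ps) = card (\<Union>j\<in>{1..n}. M j)
    \<and> card {v \<in> vecs m. wt (length ps) (cP m ps v) = 0}
        = 2 ^ (n * (m - card (\<Union>j\<in>{1..n}. M j)))
    \<and> (\<forall>i\<in>{1..length ps}.
         card {v \<in> vecs m. wt (length ps) (cP m ps v) = i}
         = card {v \<in> vecs m. wt (length ps) (cP m ps v) = 0}
           * card {c \<in> CP m ps. wt (length ps) c = i})"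
proof -
  \<comment> \<open>Neither \<open>M_ne\<close> nor the properness of the inclusions \<open>M i \<subset> {1..m}\<close> is used.\<close>
  let ?U = "\<Union>j\<in>{1..n}. M j" and ?N = "length ps"
  have M_le: "\<forall>i\<in>{1..n}. M i \<subseteq> {1..m}" and U_le: "?U \<subseteq> {1..m}" using M_sub by blast+
  have ker: "cP m ps v = 0 \<longleftrightarrow> (\<forall>k\<in>?U. v k = 0)" for v
    by (rule cP_eq_0_iff_vanishes_on_Union[OF card_field gen M_le ps_enum(2)])
  have "?N = 2 ^ (\<Sum>j=1..n. card (M j)) - 1"
    using M_le by (intro length_enum_nonzero_Dset[OF card_field gen _ ps_enum]) (auto intro: finite_subset)
  moreover have "code_dim (CP m ps) = card ?U" using U_le ker by (rule code_dim_CP)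
  moreover have "card {v \<in> vecs m. wt ?N (cP m ps v) = 0} = 2 ^ (n * (m - card ?U))"
    using card_kernel_cP[OF U_le ker] card_field by (simp add: wt_cP_eq_0_iff power_mult)
  moreover have "card {v \<in> vecs m. wt ?N (cP m ps v) = i}
      = card {v \<in> vecs m. wt ?N (cP m ps v) = 0} * card {c \<in> CP m ps. wt ?N c = i}" for i
  proof -
    interpret cP: Vector_Spaces.linear wscale wscale "cP m ps" by (rule linear_cP)
    show ?thesis unfolding wt_cP_eq_0_iff CP_def
      by (rule card_fibres_additive[OF finite_vecs]) (auto simp: vecs_def cP.add)
  qed
  ultimately show ?thesis using linear_code_CP by blast
qed

end
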